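(* Let $A,B\in\mathbb{C}^{n\times n}$ with $A$ diagonalizable and $\operatorname{rank}(B)=1$, and let $C=A+B$. If $C$ is diagonalizable, then $|\Lambda(C)|\leq 2|\Lambda(A)|$. If $C$ is not diagonalizable, then $|\Lambda(C)|\leq 2|\Lambda(A)|-1$.
   Context: For $M\in\mathbb{C}^{n\times n}$, $\Lambda(M)$ denotes the set of distinct eigenvalues of $M$ and $|\cdot|$ the cardinality of a set. *)

theory Defs
  imports "Jordan_Normal_Form.Spectral_Radius" "Jordan_Normal_Form.DL_Rank"
begin

definition diagonalizable :: "'a :: semiring_1 mat \<Rightarrow> bool" where
  "diagonalizable A \<longleftrightarrow> (\<exists>D. diagonal_mat D \<and> similar_mat A D)"

end

theory Submission
  imports Defs "Jordan_Normal_Form.Jordan_Normal_Form_Uniqueness"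
begin

text \<open>
  Put both matrices in Jordan normal form. The geometric multiplicity of an eigenvalue \<open>e\<close>
  is the kernel dimension of \<open>A - eI\<close>, and adding the rank-one matrix \<open>B\<close> lowers it by at
  most one; for the diagonalizable \<open>A\<close> it equals the algebraic multiplicity, for \<open>C\<close> it is
  the number of Jordan blocks with eigenvalue \<open>e\<close>. Counting eigenvalues with these
  multiplicities gives \<open>|\<Lambda>(C)| + n \<le> k + 2|\<Lambda>(A)|\<close>, where \<open>k\<close> is the number of
  Jordan blocks of \<open>C\<close>; and \<open>k \<le> n\<close>, with equality exactly when \<open>C\<close> is diagonalizable.
\<close>

lemma rank_plus_kernel_dim:
  fixes A :: "'a::field mat"
  assumes A: "A \<in> carrier_mat nr nc"
  shows "vec_space.rank nr A + kernel_dim A = nc"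
proof -
  interpret V: vec_space "TYPE('a)" nc .
  interpret W: vec_space "TYPE('a)" nr .
  interpret K: kernel nr nc A by unfold_locales (rule A)
  interpret L: linear_map class_ring "module_vec TYPE('a) nc" "module_vec TYPE('a) nr" "\<lambda>v. A *\<^sub>v v"
    by unfold_locales
      (use A in \<open>auto simp: module_hom_def module_vec_simps class_ring_simps
         mult_add_distrib_mat_vec mult_mat_vec\<close>)
  have "vectorspace.dim class_ring (W.vs L.im) + vectorspace.dim class_ring (V.vs L.ker) = V.dim"
    by (rule L.rank_nullity[OF V.fin_dim])
  moreover have "L.im = W.col_space A"
    unfolding L.im_def W.col_space_eq[OF A] using A by (auto simp: module_vec_simps)
  moreover have "L.ker = mat_kernel A"
    unfolding L.ker_def mat_kernel_def using A by (auto simp: module_vec_simps)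
  ultimately show ?thesis
    using A unfolding W.rank_def W.col_space_def V.dim_is_n by simp
qed

lemma kernel_dim_le_kernel_dim_add:
  fixes X B :: "'a::field mat"
  assumes X: "X \<in> carrier_mat n n" and B: "B \<in> carrier_mat n n"
  shows "kernel_dim X \<le> kernel_dim (X + B) + vec_space.rank n B"
proof -
  have "vec_space.rank n (X + B) \<le> vec_space.rank n X + vec_space.rank n B"
    by (rule vec_space.rank_subadditive[OF X B])
  with rank_plus_kernel_dim[OF X] rank_plus_kernel_dim[of "X + B" n n] X B
  show ?thesis by simp
qed

lemma char_matrix_add:
  assumes "A \<in> carrier_mat n n" and "B \<in> carrier_mat n n"
  shows "char_matrix (A + B) e = char_matrix A e + B"
  unfolding char_matrix_def using assms by (intro eq_matI) auto

lemma poly_jordan_char_poly_eq_0_iff: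
  "poly (\<Prod>(n, a)\<leftarrow>n_as. [:- a, 1:] ^ n) (k::'a::idom) = 0 \<longleftrightarrow> (\<exists>(n, a)\<in>set n_as. n \<noteq> 0 \<and> a = k)"
  by (induct n_as) auto

lemma spectrum_jordan_nf:
  fixes A :: "'a::field mat"
  assumes A: "A \<in> carrier_mat n n" and jnf: "jordan_nf A n_as"
  shows "spectrum A = snd ` set n_as"
proof -
  have "0 \<notin> fst ` set n_as" using jnf unfolding jordan_nf_def by auto
  then show ?thesis
    unfolding spectrum_root_char_poly[OF A] jordan_nf_char_poly[OF jnf]
      poly_jordan_char_poly_eq_0_iff
    by (force simp: image_iff)
qed

lemma kernel_dim_char_matrix_jordan_nf:
  fixes A :: "'a::field mat"
  assumes A: "A \<in> carrier_mat n n" and jnf: "jordan_nf A n_as"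
  shows "kernel_dim (char_matrix A e) = count_list (map snd n_as) e"
proof -
  have pos: "\<forall>(m, e')\<in>set n_as. m \<noteq> 0" using jnf unfolding jordan_nf_def by force
  have "kernel_dim (char_matrix A e) = dim_gen_eigenspace A e 1"
    unfolding dim_gen_eigenspace_def using A by simp
  also have "\<dots> = (\<Sum>m \<leftarrow> map fst [(m, e')\<leftarrow>n_as. e' = e]. min 1 m)"
    by (rule dim_gen_eigenspace[OF jnf])
  also have "\<dots> = count_list (map snd n_as) e"
    using pos by (induct n_as) auto
  finally show ?thesis .
qed

lemma jordan_matrix_unit_blocks:
  "jordan_matrix (map (\<lambda>d. (1::nat, d)) ds)
     = mat (length ds) (length ds) (\<lambda>(i, j). if i = j then ds ! i else (0::'a::{zero,one}))"
proof (induct ds)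
  case (Cons d ds)
  have "sum_list (map fst (map (\<lambda>d. (1::nat, d)) ds)) = length ds"
    by (induct ds) auto
  with Cons show ?case
    unfolding list.map(2) jordan_matrix_Cons by (intro eq_matI) (auto simp: nth_Cons')
qed (intro eq_matI, auto)

lemma diagonalizable_imp_jordan_nf_unit_blocks:
  fixes A :: "'a::field mat"
  assumes A: "A \<in> carrier_mat n n" and "diagonalizable A"
  obtains ds where "length ds = n" and "jordan_nf A (map (\<lambda>d. (1::nat, d)) ds)"
proof -
  from \<open>diagonalizable A\<close> obtain D where D: "diagonal_mat D" and sim: "similar_mat A D"
    unfolding diagonalizable_def by auto
  have "D \<in> carrier_mat n n" using similar_matD[OF sim] A by auto
  then have "D = jordan_matrix (map (\<lambda>d. (1::nat, d)) (map (\<lambda>i. D $$ (i, i)) [0..<n]))"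
    using D unfolding jordan_matrix_unit_blocks diagonal_mat_def by (intro eq_matI) auto
  with sim show ?thesis
    by (intro that[of "map (\<lambda>i. D $$ (i, i)) [0..<n]"]) (auto simp: jordan_nf_def)
qed

lemma jordan_nf_unit_blocks_imp_diagonalizable:
  assumes jnf: "jordan_nf C cs" and unit: "\<forall>x\<in>set cs. fst x = 1"
  shows "diagonalizable C"
proof -
  have "cs = map (\<lambda>d. (1::nat, d)) (map snd cs)"
    using unit by (induct cs) auto
  then have "similar_mat C (jordan_matrix (map (\<lambda>d. (1::nat, d)) (map snd cs)))"
    using jnf unfolding jordan_nf_def by metis
  moreover have "diagonal_mat (jordan_matrix (map (\<lambda>d. (1::nat, d)) (map snd cs)))"
    unfolding jordan_matrix_unit_blocks diagonal_mat_def by auto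
  ultimately show ?thesis unfolding diagonalizable_def by blast
qed

lemma length_le_sum_list_pos:
  "\<forall>x\<in>set xs. (0::nat) < x \<Longrightarrow> length xs \<le> sum_list xs"
  by (induct xs) auto

lemma sum_list_eq_length_imp_ones:
  "\<forall>x\<in>set xs. (0::nat) < x \<Longrightarrow> sum_list xs = length xs \<Longrightarrow> \<forall>x\<in>set xs. x = 1"
proof (induct xs)
  case (Cons a xs)
  with length_le_sum_list_pos[of xs] show ?case by auto
qed simp

lemma jordan_nf_block_sizes:
  assumes C: "C \<in> carrier_mat n n" and jnf: "jordan_nf C cs"
  shows "\<forall>m\<in>set (map fst cs). 0 < m" and "sum_list (map fst cs) = n"
proof -
  show "\<forall>m\<in>set (map fst cs). 0 < m" using jnf unfolding jordan_nf_def by force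
  have "jordan_matrix cs \<in> carrier_mat n n"
    using jnf similar_matD C unfolding jordan_nf_def by fastforce
  then show "sum_list (map fst cs) = n" by auto
qed

lemma jordan_nf_length_le:
  assumes "C \<in> carrier_mat n n" and "jordan_nf C cs"
  shows "length cs \<le> n"
  using length_le_sum_list_pos jordan_nf_block_sizes[OF assms] by fastforce

lemma jordan_nf_length_eq_imp_diagonalizable:
  assumes C: "C \<in> carrier_mat n n" and jnf: "jordan_nf C cs" and "length cs = n"
  shows "diagonalizable C"
proof (rule jordan_nf_unit_blocks_imp_diagonalizable[OF jnf])
  have "\<forall>m\<in>set (map fst cs). m = 1"
    using sum_list_eq_length_imp_ones[of "map fst cs"] jordan_nf_block_sizes[OF C jnf]
      \<open>length cs = n\<close>
    by simp
  then show "\<forall>x\<in>set cs. fst x = 1" by simp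
qed

text \<open>
  Pointwise, \<open>[e \<in> es] + count ds e \<le> count es e + 2 [e \<in> ds]\<close>; sum over all values.
\<close>
lemma card_set_plus_length_le:
  assumes le: "\<And>e. count_list ds e \<le> count_list es e + 1"
  shows "card (set es) + length ds \<le> length es + 2 * card (set ds)"
proof -
  let ?U = "set ds \<union> set es"
  have "card (set es) + length ds = (\<Sum>e\<in>?U. of_bool (e \<in> set es) + count_list ds e)"
    by (simp add: sum.distrib sum_count_set sum.If_cases Int_absorb1)
  also have "\<dots> \<le> (\<Sum>e\<in>?U. count_list es e + 2 * of_bool (e \<in> set ds))"
  proof (rule sum_mono)
    fix e
    show "of_bool (e \<in> set es) + count_list ds e \<le> count_list es e + 2 * of_bool (e \<in> set ds)"
      using le[of e] count_list_0_iff[of es e] count_list_0_iff[of ds e] by auto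
  qed
  also have "\<dots> = length es + 2 * card (set ds)"
    by (simp add: sum.distrib sum_count_set sum.If_cases Int_absorb1 flip: sum_distrib_left)
  finally show ?thesis .
qed

theorem corollary4p2:
  fixes A B C :: "complex mat" and n :: nat
  assumes A: "A \<in> carrier_mat n n" and B: "B \<in> carrier_mat n n"
    and diagA: "diagonalizable A"
    and rankB: "vec_space.rank n B = 1"
    and C: "C = A + B"
  shows "(diagonalizable C \<longrightarrow> card (spectrum C) \<le> 2 * card (spectrum A))
       \<and> (\<not> diagonalizable C \<longrightarrow> card (spectrum C) \<le> 2 * card (spectrum A) - 1)"
proof -
  have Cc: "C \<in> carrier_mat n n" using A B C by simp
  obtain ds where len: "length ds = n" and jA: "jordan_nf A (map (\<lambda>d. (1::nat, d)) ds)"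
    using diagonalizable_imp_jordan_nf_unit_blocks[OF A diagA] .
  obtain as where "char_poly C = (\<Prod>a\<leftarrow>as. [:- a, 1:])"
    using char_poly_factorized[OF Cc] by auto
  then obtain cs where jC: "jordan_nf C cs" using jordan_nf_exists[OF Cc] by blast
  have "count_list ds e \<le> count_list (map snd cs) e + 1" for e
  proof -
    have "kernel_dim (char_matrix A e) \<le> kernel_dim (char_matrix C e) + 1"
      using kernel_dim_le_kernel_dim_add[OF _ B, of "char_matrix A e"] A rankB
      unfolding C char_matrix_add[OF A B] by simp
    then show ?thesis
      unfolding kernel_dim_char_matrix_jordan_nf[OF A jA] kernel_dim_char_matrix_jordan_nf[OF Cc jC]
      by (simp add: comp_def)
  qed
  from card_set_plus_length_le[OF this]
  have "card (spectrum C) + n \<le> length cs + 2 * card (spectrum A)"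
    unfolding spectrum_jordan_nf[OF A jA] spectrum_jordan_nf[OF Cc jC] len
    by (simp add: image_image)
  moreover have "length cs \<le> n" by (rule jordan_nf_length_le[OF Cc jC])
  moreover have "length cs = n \<Longrightarrow> diagonalizable C"
    by (rule jordan_nf_length_eq_imp_diagonalizable[OF Cc jC])
  ultimately show ?thesis by fastforce
qed

end
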